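(* Consider an LSTM network with weight matrices $W_\star\in\mathbb{R}^{n_x\times n_u}$, $U_\star\in\mathbb{R}^{n_x\times n_x}$, biases $b_\star\in\mathbb{R}^{n_x}$ ($\star\in\{f,i,o,c\}$) and input bound $u_{\max}>0$. If \[ -1+\bar{\sigma}_g^f+\alpha\bar{\sigma}_g^o+\tfrac14\bar{\sigma}_c^x\|U_o\|<\tfrac14\bar{\sigma}_g^f\bar{\sigma}_c^x\|U_o\|<1, \] where $\alpha=\tfrac14\|U_f\|\frac{\bar{\sigma}_g^i\bar{\sigma}_c^c}{1-\bar{\sigma}_g^f}+\bar{\sigma}_g^i\|U_c\|+\tfrac14\|U_i\|\bar{\sigma}_c^c$, then \[ \bar{\sigma}_g^f+\bar{\sigma}_g^o\bar{\sigma}_g^i\|U_c\|<1. \]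
   Context: $\sigma_g(t)=1/(1+e^{-t})$, $\sigma_c=\tanh$. $\|\cdot\|$ is the induced 2-norm, $\|\cdot\|_\infty$ the induced $\infty$-norm. For $\star\in\{f,i,o\}$, $\bar{\sigma}_g^\star=\sigma_g(\|[W_\star u_{\max}\ U_\star\ b_\star]\|_\infty)$ (horizontal concatenation); $\bar{\sigma}_c^c=\sigma_c(\|[W_c u_{\max}\ U_c\ b_c]\|_\infty)$; $\bar{\sigma}_c^x=\sigma_c(\bar{\sigma}_g^i\bar{\sigma}_c^c/(1-\bar{\sigma}_g^f))$. *)

theory Defs
  imports "HOL-Analysis.Analysis"
begin

definition sigmoid :: "real \<Rightarrow> real" where
  "sigmoid t = 1 / (1 + exp (- t))"

definition linf_norm :: "real ^ 'n::finite \<Rightarrow> real" where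
  "linf_norm v = Max (range (\<lambda>i. \<bar>v $ i\<bar>))"

definition induced_inf_norm :: "real ^ 'c::finite ^ 'r::finite \<Rightarrow> real" where
  "induced_inf_norm A = (SUP x\<in>{x. linf_norm x \<le> 1}. linf_norm (A *v x))"

definition induced_2_norm :: "real ^ 'c::finite ^ 'r::finite \<Rightarrow> real" where
  "induced_2_norm A = onorm (\<lambda>x. A *v x)"

text \<open>Horizontal concatenation [W*u_max  U  b], columns indexed by 'u + ('x + unit).\<close>
definition hcat :: "real ^ 'u::finite ^ 'x::finite \<Rightarrow> real \<Rightarrow> real ^ 'x ^ 'x \<Rightarrow> real ^ 'x
    \<Rightarrow> real ^ ('u + ('x + unit)) ^ 'x" where
  "hcat W u U b = (\<chi> i. \<chi> j. (case j of
       Inl k \<Rightarrow> W $ i $ k * u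
     | Inr (Inl k) \<Rightarrow> U $ i $ k
     | Inr (Inr _) \<Rightarrow> b $ i))"

definition sig_g_bar :: "real ^ 'u::finite ^ 'x::finite \<Rightarrow> real ^ 'x ^ 'x \<Rightarrow> real ^ 'x \<Rightarrow> real \<Rightarrow> real" where
  "sig_g_bar W U b umax = sigmoid (induced_inf_norm (hcat W umax U b))"

definition sig_c_bar :: "real ^ 'u::finite ^ 'x::finite \<Rightarrow> real ^ 'x ^ 'x \<Rightarrow> real ^ 'x \<Rightarrow> real \<Rightarrow> real" where
  "sig_c_bar W U b umax = tanh (induced_inf_norm (hcat W umax U b))"

end

theory Submission
  imports Defs
begin

text \<open>
  Every summand of \<open>\<alpha>\<close> is nonnegative, so \<open>\<alpha> \<ge> sgi * \<parallel>U\<^sub>c\<parallel>\<close>; and since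
  \<open>sgf < 1\<close>, the right-hand side of the first hypothesis is at most
  \<open>scx * \<parallel>U\<^sub>o\<parallel> / 4\<close>. Cancelling this term leaves
  \<open>-1 + sgf + sgo * sgi * \<parallel>U\<^sub>c\<parallel> < 0\<close>.
\<close>

lemma abs_le_linf_norm:
  fixes v :: "real ^ 'n::finite"
  shows "\<bar>v $ i\<bar> \<le> linf_norm v"
  unfolding linf_norm_def by (rule Max_ge) auto

lemma linf_norm_nonneg: "0 \<le> linf_norm (v :: real ^ 'n::finite)"
  using abs_le_linf_norm[of v undefined] by linarith

lemma linf_norm_le:
  fixes v :: "real ^ 'n::finite"
  assumes "\<And>i. \<bar>v $ i\<bar> \<le> C"
  shows "linf_norm v \<le> C"
  unfolding linf_norm_def using assms by (subst Max_le_iff) auto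

lemma linf_norm_matrix_vector_mult_le:
  fixes A :: "real ^ 'c::finite ^ 'r::finite"
  shows "linf_norm (A *v x) \<le> (\<Sum>i\<in>UNIV. \<Sum>j\<in>UNIV. \<bar>A $ i $ j\<bar>) * linf_norm x"
proof (rule linf_norm_le)
  fix i
  have "\<bar>(A *v x) $ i\<bar> \<le> (\<Sum>j\<in>UNIV. \<bar>A $ i $ j\<bar> * \<bar>x $ j\<bar>)"
    using sum_abs[of "\<lambda>j. A $ i $ j * x $ j" UNIV] by (simp add: matrix_vector_mult_def abs_mult)
  also have "\<dots> \<le> (\<Sum>j\<in>UNIV. \<bar>A $ i $ j\<bar>) * linf_norm x"
    unfolding sum_distrib_right by (rule sum_mono) (simp add: abs_le_linf_norm mult_left_mono)
  also have "\<dots> \<le> (\<Sum>i\<in>UNIV. \<Sum>j\<in>UNIV. \<bar>A $ i $ j\<bar>) * linf_norm x"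
    by (rule mult_right_mono[OF member_le_sum linf_norm_nonneg]) (auto intro: sum_nonneg)
  finally show "\<bar>(A *v x) $ i\<bar> \<le> (\<Sum>i\<in>UNIV. \<Sum>j\<in>UNIV. \<bar>A $ i $ j\<bar>) * linf_norm x" .
qed

lemma induced_inf_norm_nonneg: "0 \<le> induced_inf_norm (A :: real ^ 'c::finite ^ 'r::finite)"
proof -
  define C where "C = (\<Sum>i\<in>UNIV. \<Sum>j\<in>UNIV. \<bar>A $ i $ j\<bar>)"
  have "C \<ge> 0"
    unfolding C_def by (auto intro: sum_nonneg)
  then have "linf_norm (A *v x) \<le> C" if "linf_norm x \<le> 1" for x
    using linf_norm_matrix_vector_mult_le[of A x, folded C_def] mult_left_le[OF that]
    by (meson order_trans)
  then have bdd: "bdd_above ((\<lambda>x. linf_norm (A *v x)) ` {x. linf_norm x \<le> 1})"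
    by (intro bdd_aboveI2) simp
  have "(0 :: real ^ 'c) \<in> {x. linf_norm x \<le> 1}"
    by (simp add: linf_norm_le)
  then have "linf_norm (A *v 0) \<le> induced_inf_norm A"
    unfolding induced_inf_norm_def by (rule cSUP_upper[OF _ bdd])
  with linf_norm_nonneg show ?thesis
    by (rule order_trans)
qed

lemma induced_2_norm_nonneg: "0 \<le> induced_2_norm (A :: real ^ 'c::finite ^ 'r::finite)"
  unfolding induced_2_norm_def by (rule onorm_pos_le) simp

lemma sigmoid_pos: "0 < sigmoid t"
  unfolding sigmoid_def by (simp add: add_pos_pos)

lemma sigmoid_less_1: "sigmoid t < 1"
  unfolding sigmoid_def by (simp add: add_pos_pos)

lemma sig_g_bar_pos: "0 < sig_g_bar W U b u"
  unfolding sig_g_bar_def by (rule sigmoid_pos)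

lemma sig_g_bar_less_1: "sig_g_bar W U b u < 1"
  unfolding sig_g_bar_def by (rule sigmoid_less_1)

lemma sig_c_bar_nonneg: "0 \<le> sig_c_bar W U b u"
  unfolding sig_c_bar_def by (simp add: induced_inf_norm_nonneg)

theorem corollary1:
  fixes Wf Wi Wo Wc :: "real ^ 'u::finite ^ 'x::finite"
    and Uf Ui Uo Uc :: "real ^ 'x ^ 'x"
    and bf bi bo bc :: "real ^ 'x"
    and umax :: real
  assumes "umax > 0"
  defines "sgf \<equiv> sig_g_bar Wf Uf bf umax"
      and "sgi \<equiv> sig_g_bar Wi Ui bi umax"
      and "sgo \<equiv> sig_g_bar Wo Uo bo umax"
      and "scc \<equiv> sig_c_bar Wc Uc bc umax"
  defines "scx \<equiv> tanh (sgi * scc / (1 - sgf))"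
  defines "\<alpha> \<equiv> 1/4 * induced_2_norm Uf * (sgi * scc / (1 - sgf))
                 + sgi * induced_2_norm Uc + 1/4 * induced_2_norm Ui * scc"
  assumes "-1 + sgf + \<alpha> * sgo + 1/4 * scx * induced_2_norm Uo
             < 1/4 * sgf * scx * induced_2_norm Uo"
      and "1/4 * sgf * scx * induced_2_norm Uo < 1"
  shows "sgf + sgo * sgi * induced_2_norm Uc < 1"
proof -
  have sgf: "0 < sgf" "sgf < 1" and sgi: "0 < sgi" and sgo: "0 < sgo" and scc: "0 \<le> scc"
    unfolding sgf_def sgi_def sgo_def scc_def
    by (simp_all add: sig_g_bar_pos sig_g_bar_less_1 sig_c_bar_nonneg)
  have ratio: "0 \<le> sgi * scc / (1 - sgf)"
    using sgf sgi scc by simp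
  have "sgi * induced_2_norm Uc \<le> \<alpha>"
    unfolding \<alpha>_def
    by (intro add_increasing add_increasing2 order_refl mult_nonneg_nonneg
        induced_2_norm_nonneg ratio scc) simp_all
  then have "sgo * sgi * induced_2_norm Uc \<le> \<alpha> * sgo"
    using sgo by (simp add: mult.commute mult.left_commute)
  moreover have "0 \<le> scx * induced_2_norm Uo"
    unfolding scx_def using ratio by (simp add: induced_2_norm_nonneg)
  then have "sgf * scx * induced_2_norm Uo \<le> scx * induced_2_norm Uo"
    using sgf by (simp add: mult.assoc mult_left_le_one_le)
  ultimately show ?thesis
    using assms(8) by linarith
qed

end
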